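(* Let $G$ be a group with identity $e$, $A$ a set containing two distinct elements $0$ and $1$, $S \subseteq G$ finite with $e \in S$, and $r \in S \setminus \{e\}$. Let $p \in A^S$ be given by $p(r) = 1$ and $p(s) = 0$ for $s \in S \setminus\{r\}$, and let $\tau : A^G \to A^G$ be the lazy cellular automaton with minimal local map $\mu : A^S \to A$, unique active transition $p$ and writing symbol $\mu(p) = 1$. Then for any $n\geq 2$, $\mathrm{ord}(\tau) > n$ if and only if $r^j\notin S$ for all $2\leq j \leq n$.
   Context: $A^G$ is the set of maps $G \to A$ with shift action $(g\cdot x)(h) := x(hg)$. A cellular automaton is a map $\tau : A^G \to A^G$ with a finite $S \subseteq G$ and $\mu : A^S \to A$ such that $\tau(x)(g) = \mu((g\cdot x)|_S)$; the minimal local map is the local defining map on the neighborhood of smallest cardinality. $\tau$ is lazy with unique active transition $p \in A^S$ and writing symbol $\mu(p)$ if $e \in S$ and for all $z \in A^S$: $\mu(z) = z(e)$ iff $z \neq p$. $\tau^k$ is the $k$-fold composition, $\tau^0$ the identity; $\mathrm{ord}(\tau) := |\{\tau^k : k \in \mathbb{N}\}|$, $\mathbb{N}=\{0,1,\dots\}$. *)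

theory Defs
  imports Main "HOL-Library.FuncSet" "HOL-Library.Extended_Nat"
begin

text \<open>The group G is a type of class group_add (group operation written +,
identity 0, not assumed commutative). Configurations A^G are functions 'g \<Rightarrow> 'a.\<close>

definition shift :: "'g::group_add \<Rightarrow> ('g \<Rightarrow> 'a) \<Rightarrow> ('g \<Rightarrow> 'a)" where
  "shift g x = (\<lambda>h. x (h + g))"

text \<open>Cellular automaton with neighborhood S and local map mu; patterns in A^S are
represented as extensional functions (undefined outside S).\<close>
definition cell_aut :: "'g::group_add set \<Rightarrow> (('g \<Rightarrow> 'a) \<Rightarrow> 'a) \<Rightarrow> ('g \<Rightarrow> 'a) \<Rightarrow> ('g \<Rightarrow> 'a)" where
  "cell_aut S mu x = (\<lambda>g. mu (restrict (shift g x) S))"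

definition lazy_local :: "'g::group_add set \<Rightarrow> (('g \<Rightarrow> 'a) \<Rightarrow> 'a) \<Rightarrow> ('g \<Rightarrow> 'a) \<Rightarrow> bool" where
  "lazy_local S mu p \<longleftrightarrow> 0 \<in> S \<and> p \<in> S \<rightarrow>\<^sub>E UNIV \<and>
     (\<forall>z \<in> S \<rightarrow>\<^sub>E UNIV. mu z = z 0 \<longleftrightarrow> z \<noteq> p)"

definition ca_ord :: "('b \<Rightarrow> 'b) \<Rightarrow> enat" where
  "ca_ord tau = (if finite {tau ^^ k | k. True} then enat (card {tau ^^ k | k. True}) else \<infinity>)"

primrec gpow :: "'g::group_add \<Rightarrow> nat \<Rightarrow> 'g" where
  "gpow r 0 = 0"
| "gpow r (Suc j) = gpow r j + r"

end

theory Submission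
  imports Defs
begin

(* A cell of tau changes only by being overwritten with the writing symbol one, and it does so
   exactly when the pattern p (one at r + g, zero on the rest of S + g) is seen around it.
   If g fires at time t + 1 then r + g fired at time t: the zeros around g were already zero,
   and had r + g already been one, g would have fired at time t and could not show p(0) = zero
   now.  Iterating, a firing at time i forces the initial configuration to be one at
   r^(i+1) + g.  So if r^(i+1) lies in S and r^i <> 0, that cell reads one and not zero when g
   would fire at time i; nothing fires then and tau^(i+1) = tau^i.  The least j >= 2 with
   r^j in S has r^(j-1) <> 0, whence ord(tau) <= j.  Conversely, if no r^j with 2 <= j <= n lies
   in S, the configuration that is one exactly at r^n grows by one cell per step into
   {r^(n-k), ..., r^n}, so tau^0, ..., tau^n are pairwise distinct. *)

lemma gpow_add: "gpow r (i + j) = gpow r i + gpow r j"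
  by (induction j) (simp_all add: add.assoc)

lemma gpow_Suc_left: "gpow r (Suc j) = r + gpow r j"
  using gpow_add[of r 1 j] by simp

lemma gpow_add_right_cancel:
  assumes "m \<le> i" and "s + gpow r m = gpow r i"
  shows "s = gpow r (i - m)"
proof -
  have "gpow r i = gpow r (i - m) + gpow r m"
    using gpow_add[of r "i - m" m] assms(1) by simp
  with assms(2) show ?thesis by simp
qed

lemma gpow_mem_with_nonzero_pred:
  assumes "0 \<in> S" and "r \<noteq> 0" and "2 \<le> j" and "gpow r j \<in> S"
  shows "\<exists>i<j. gpow r (Suc i) \<in> S \<and> gpow r i \<noteq> 0"
  using assms(3,4)
proof (induction j rule: less_induct)
  case (less j)
  then obtain i where j: "j = Suc i" and "1 \<le> i"
    by (cases j) auto
  show ?case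
  proof (cases "gpow r i = 0")
    case True
    then have "2 \<le> i"
      using \<open>1 \<le> i\<close> \<open>r \<noteq> 0\<close> by (cases "i = 1") auto
    with True less.IH[of i] \<open>0 \<in> S\<close> j
    obtain i' where "i' < i" "gpow r (Suc i') \<in> S" "gpow r i' \<noteq> 0"
      by auto
    with j show ?thesis
      using less_SucI by blast
  next
    case False
    with less.prems j show ?thesis by auto
  qed
qed

lemma funpow_add_eq_of_Suc_eq:
  fixes f :: "'a \<Rightarrow> 'a"
  assumes "f ^^ Suc i = f ^^ i"
  shows "f ^^ (k + i) = f ^^ i"
proof (induction k)
  case (Suc k)
  have "f ^^ (Suc k + i) = f \<circ> f ^^ (k + i)" by simp
  also have "\<dots> = f ^^ Suc i" using Suc.IH by simp
  finally show ?case using assms by simp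
qed simp

lemma ca_ord_le_if_funpow_Suc_eq:
  assumes "f ^^ Suc i = f ^^ i"
  shows "ca_ord f \<le> enat (Suc i)"
proof -
  let ?T = "{f ^^ k | k. True}"
  have "f ^^ k \<in> (\<lambda>k. f ^^ k) ` {..i}" for k
  proof (cases "k \<le> i")
    case False
    then have "f ^^ k = f ^^ i"
      using funpow_add_eq_of_Suc_eq[OF assms, of "k - i"] by simp
    then show ?thesis by auto
  qed auto
  then have sub: "?T \<subseteq> (\<lambda>k. f ^^ k) ` {..i}" by blast
  then have "card ?T \<le> Suc i"
    using card_mono[OF _ sub] card_image_le[of "{..i}" "\<lambda>k. f ^^ k"] by simp
  with finite_subset[OF sub] show ?thesis
    unfolding ca_ord_def by simp
qed

lemma ca_ord_gt_if_inj_on_funpow: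
  assumes "inj_on (\<lambda>k. f ^^ k) {..n}"
  shows "enat n < ca_ord f"
proof (cases "finite {f ^^ k | k. True}")
  case True
  have "(\<lambda>k. f ^^ k) ` {..n} \<subseteq> {f ^^ k | k. True}" by blast
  from card_mono[OF True this] have "Suc n \<le> card {f ^^ k | k. True}"
    using card_image[OF assms] by simp
  with True show ?thesis
    unfolding ca_ord_def by simp
qed (simp add: ca_ord_def)

locale lazy_ca =
  fixes S :: "'g::group_add set" and mu :: "('g \<Rightarrow> 'a) \<Rightarrow> 'a" and p :: "'g \<Rightarrow> 'a"
  assumes lazy: "lazy_local S mu p"
begin

abbreviation tau :: "('g \<Rightarrow> 'a) \<Rightarrow> 'g \<Rightarrow> 'a" where
  "tau \<equiv> cell_aut S mu"

definition pattern_at :: "('g \<Rightarrow> 'a) \<Rightarrow> 'g \<Rightarrow> bool" where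
  "pattern_at y g \<longleftrightarrow> (\<forall>s\<in>S. y (s + g) = p s)"

lemma zero_in_S: "0 \<in> S"
  using lazy unfolding lazy_local_def by blast

lemma pattern_at_value: "pattern_at y g \<Longrightarrow> y g = p 0"
  using zero_in_S unfolding pattern_at_def by (metis add_0)

lemma mu_p_neq_p_at_0: "mu p \<noteq> p 0"
  using lazy unfolding lazy_local_def by blast

lemma tau_apply: "tau y g = (if pattern_at y g then mu p else y g)"
proof -
  let ?z = "restrict (shift g y) S"
  have p_ext: "p \<in> extensional S"
    using lazy unfolding lazy_local_def by (simp add: PiE_iff)
  have z_eq_p: "?z = p \<longleftrightarrow> pattern_at y g"
  proof
    assume "?z = p"
    then show "pattern_at y g"
      unfolding pattern_at_def by (metis restrict_apply' shift_def)
  next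
    assume "pattern_at y g"
    then show "?z = p"
      using p_ext unfolding pattern_at_def
      by (intro ext) (auto simp: shift_def extensional_def)
  qed
  show ?thesis
  proof (cases "pattern_at y g")
    case True
    with z_eq_p show ?thesis
      by (simp add: cell_aut_def)
  next
    case False
    moreover have "?z \<in> S \<rightarrow>\<^sub>E UNIV"
      by simp
    ultimately have "mu ?z = ?z 0"
      using z_eq_p lazy unfolding lazy_local_def by blast
    with False zero_in_S show ?thesis
      by (simp add: cell_aut_def shift_def)
  qed
qed

lemma tau_changes_iff: "tau y g \<noteq> y g \<longleftrightarrow> pattern_at y g"
  using tau_apply pattern_at_value mu_p_neq_p_at_0 by auto

lemma funpow_unwritten_const:
  assumes "t \<le> t'" and "(tau ^^ t') x g \<noteq> mu p"
  shows "(tau ^^ t) x g = (tau ^^ t') x g"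
  using assms
proof (induction t')
  case (Suc m)
  then have "(tau ^^ Suc m) x g = (tau ^^ m) x g"
    using tau_apply[of "(tau ^^ m) x" g] by (auto split: if_splits)
  with Suc show ?case
    by (cases "t \<le> m") (auto simp: le_Suc_eq)
qed simp

lemma funpow_written_persists:
  "t \<le> t' \<Longrightarrow> (tau ^^ t) x g = mu p \<Longrightarrow> (tau ^^ t') x g = mu p"
  using funpow_unwritten_const by metis

end

locale single_one_ca = lazy_ca S mu p
  for S :: "'g::group_add set" and mu :: "('g \<Rightarrow> 'a) \<Rightarrow> 'a" and p :: "'g \<Rightarrow> 'a" +
  fixes r :: 'g and zero one :: 'a
  assumes symbols_distinct: "zero \<noteq> one"
    and r_in_S: "r \<in> S" and r_nonzero: "r \<noteq> 0"
    and p_eq: "p = restrict (\<lambda>s. if s = r then one else zero) S"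
    and mu_p: "mu p = one"
begin

lemma p_at_r: "p r = one"
  using r_in_S p_eq by simp

lemma p_other: "s \<in> S \<Longrightarrow> s \<noteq> r \<Longrightarrow> p s = zero"
  using p_eq by simp

lemma p_at_0: "p 0 = zero"
  using zero_in_S r_nonzero p_other by simp

lemma pattern_at_funpow_Suc:
  assumes pat: "pattern_at ((tau ^^ Suc t) x) h"
  shows "pattern_at ((tau ^^ t) x) (r + h)"
proof -
  have agrees_off_r: "(tau ^^ t) x (s + h) = p s" if "s \<in> S" "s \<noteq> r" for s
    using pat that p_other funpow_unwritten_const[of t "Suc t" x "s + h"]
      symbols_distinct mu_p
    unfolding pattern_at_def by auto
  have "(tau ^^ t) x (r + h) \<noteq> one"
  proof
    assume "(tau ^^ t) x (r + h) = one"
    with agrees_off_r p_at_r have "pattern_at ((tau ^^ t) x) h"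
      unfolding pattern_at_def by metis
    then have "(tau ^^ Suc t) x h = one"
      using tau_apply mu_p by simp
    with pattern_at_value[OF pat] show False
      using p_at_0 symbols_distinct by simp
  qed
  moreover have "(tau ^^ Suc t) x (r + h) = one"
    using pat r_in_S p_at_r unfolding pattern_at_def by simp
  ultimately show ?thesis
    using tau_changes_iff by (metis funpow.simps(2) o_apply)
qed

lemma pattern_at_funpow_add:
  "pattern_at ((tau ^^ (t + i)) x) g \<Longrightarrow> pattern_at ((tau ^^ t) x) (gpow r i + g)"
proof (induction i arbitrary: t)
  case (Suc i)
  then have "pattern_at ((tau ^^ Suc t) x) (gpow r i + g)"
    by (metis add_Suc add_Suc_right)
  from pattern_at_funpow_Suc[OF this] show ?case
    by (metis gpow_Suc_left add.assoc)
qed simp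

lemma pattern_at_funpow_initial_one:
  "pattern_at ((tau ^^ i) x) g \<Longrightarrow> x (gpow r (Suc i) + g) = one"
  using pattern_at_funpow_add[of 0 i x g] r_in_S p_at_r
  unfolding pattern_at_def by (metis funpow_0 gpow_Suc_left add.assoc add_0)

lemma funpow_Suc_eq_if_gpow_in_S:
  assumes in_S: "gpow r (Suc i) \<in> S" and nonzero: "gpow r i \<noteq> 0"
  shows "tau ^^ Suc i = tau ^^ i"
proof (intro ext)
  fix x g
  have "\<not> pattern_at ((tau ^^ i) x) g"
  proof
    assume pat: "pattern_at ((tau ^^ i) x) g"
    have "gpow r (Suc i) \<noteq> r"
      using nonzero add_right_cancel[of "gpow r i" r 0] by auto
    with pat in_S have "(tau ^^ i) x (gpow r (Suc i) + g) = zero"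
      using p_other unfolding pattern_at_def by simp
    moreover have "(tau ^^ i) x (gpow r (Suc i) + g) = one"
      using funpow_written_persists[of 0 i] pattern_at_funpow_initial_one[OF pat] mu_p
      by simp
    ultimately show False
      using symbols_distinct by simp
  qed
  then show "(tau ^^ Suc i) x g = (tau ^^ i) x g"
    using tau_changes_iff[of "(tau ^^ i) x" g] by auto
qed

definition ones_on :: "'g set \<Rightarrow> 'g \<Rightarrow> 'a" where
  "ones_on A = (\<lambda>g. if g \<in> A then one else zero)"

lemma ones_on_eq_iff: "ones_on A = ones_on B \<longleftrightarrow> A = B"
proof
  assume eq: "ones_on A = ones_on B"
  show "A = B"
  proof (intro set_eqI)
    fix g
    show "g \<in> A \<longleftrightarrow> g \<in> B"
      using fun_cong[OF eq, of g] symbols_distinct by (auto simp: ones_on_def split: if_splits)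
  qed
qed simp

context
  fixes n :: nat
  assumes no_gpow_in_S: "\<And>j. 2 \<le> j \<Longrightarrow> j \<le> n \<Longrightarrow> gpow r j \<notin> S"
begin

lemma gpow_in_S_eq_r: "gpow r d \<in> S \<Longrightarrow> 0 < d \<Longrightarrow> d \<le> n \<Longrightarrow> gpow r d = r"
  using no_gpow_in_S[of d] by (cases "d = 1") auto

lemma gpow_nonzero: "0 < d \<Longrightarrow> d \<le> n \<Longrightarrow> gpow r d \<noteq> 0"
  using gpow_in_S_eq_r zero_in_S r_nonzero by metis

lemma inj_on_gpow: "inj_on (gpow r) {..n}"
proof -
  have "gpow r a \<noteq> gpow r b" if "a < b" "b \<le> n" for a b
  proof
    assume "gpow r a = gpow r b"
    then have "gpow r (b - a) = 0"
      using gpow_add_right_cancel[of a b 0 r] that by simp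
    moreover have "0 < b - a" "b - a \<le> n"
      using that by auto
    ultimately show False
      using gpow_nonzero by blast
  qed
  then show ?thesis
    by (intro inj_onI) (metis atMost_iff linorder_neqE_nat)
qed

lemma pattern_at_ones_on_segment:
  assumes "m < n"
  shows "pattern_at (ones_on (gpow r ` {Suc m..n})) (gpow r m)"
  unfolding pattern_at_def
proof
  fix s
  assume "s \<in> S"
  show "ones_on (gpow r ` {Suc m..n}) (s + gpow r m) = p s"
  proof (cases "s = r")
    case True
    have "r + gpow r m \<in> gpow r ` {Suc m..n}"
      using gpow_Suc_left[of r m] assms by (metis atLeastAtMost_iff image_eqI le_refl Suc_leI)
    with True show ?thesis
      using p_at_r by (simp add: ones_on_def)
  next
    case False
    have "s + gpow r m \<notin> gpow r ` {Suc m..n}"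
    proof
      assume "s + gpow r m \<in> gpow r ` {Suc m..n}"
      then obtain i where "s + gpow r m = gpow r i" "Suc m \<le> i" "i \<le> n"
        by auto
      then have "s = gpow r (i - m)" "0 < i - m" "i - m \<le> n"
        using gpow_add_right_cancel[of m i s r] by auto
      with \<open>s \<in> S\<close> \<open>s \<noteq> r\<close> show False
        using gpow_in_S_eq_r by blast
    qed
    with \<open>s \<in> S\<close> False show ?thesis
      using p_other by (simp add: ones_on_def)
  qed
qed

lemma not_pattern_at_ones_on_segment:
  assumes "g \<noteq> gpow r m"
  shows "\<not> pattern_at (ones_on (gpow r ` {Suc m..n})) g"
proof
  let ?y = "ones_on (gpow r ` {Suc m..n})"
  assume pat: "pattern_at ?y g"
  then have "?y (r + g) = one"
    using r_in_S p_at_r unfolding pattern_at_def by simp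
  then have "r + g \<in> gpow r ` {Suc m..n}"
    using symbols_distinct by (simp add: ones_on_def split: if_splits)
  then obtain k where "r + g = gpow r k" "Suc m \<le> k" "k \<le> n"
    by auto
  then obtain i where i: "r + g = gpow r (Suc i)" "Suc m \<le> Suc i" "Suc i \<le> n"
    by (cases k) auto
  then have "g = gpow r i"
    by (metis gpow_Suc_left add_left_cancel)
  moreover from this assms i(2) have "Suc m \<le> i"
    by (cases "i = m") auto
  moreover have "i \<le> n"
    using i(3) by simp
  ultimately have "?y g = one"
    by (simp add: ones_on_def)
  with pattern_at_value[OF pat] show False
    using p_at_0 symbols_distinct by simp
qed

lemma tau_ones_on_segment:
  assumes "m < n"
  shows "tau (ones_on (gpow r ` {Suc m..n})) = ones_on (gpow r ` {m..n})"
proof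
  fix g
  let ?y = "ones_on (gpow r ` {Suc m..n})"
  show "tau ?y g = ones_on (gpow r ` {m..n}) g"
  proof (cases "g = gpow r m")
    case True
    with assms show ?thesis
      using pattern_at_ones_on_segment tau_apply mu_p by (simp add: ones_on_def)
  next
    case False
    then have "tau ?y g = ?y g"
      using not_pattern_at_ones_on_segment tau_changes_iff by blast
    moreover have "{m..n} = insert m {Suc m..n}"
      using assms by auto
    ultimately show ?thesis
      using False by (simp add: ones_on_def)
  qed
qed

lemma funpow_tau_ones_on_segment:
  "k \<le> n \<Longrightarrow> (tau ^^ k) (ones_on {gpow r n}) = ones_on (gpow r ` {n - k..n})"
proof (induction k)
  case (Suc k)
  then have "tau (ones_on (gpow r ` {Suc (n - Suc k)..n})) = ones_on (gpow r ` {n - Suc k..n})"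
    using tau_ones_on_segment by simp
  with Suc show ?case
    by (simp add: Suc_diff_Suc)
qed simp

lemma inj_on_funpow_tau: "inj_on (\<lambda>k. tau ^^ k) {..n}"
proof (intro inj_onI)
  fix a b
  assume a: "a \<in> {..n}" and b: "b \<in> {..n}" and eq: "tau ^^ a = tau ^^ b"
  have "ones_on (gpow r ` {n - a..n}) = (tau ^^ a) (ones_on {gpow r n})"
    using a funpow_tau_ones_on_segment by simp
  also have "\<dots> = (tau ^^ b) (ones_on {gpow r n})"
    using eq by simp
  also have "\<dots> = ones_on (gpow r ` {n - b..n})"
    using b funpow_tau_ones_on_segment by simp
  finally have "ones_on (gpow r ` {n - a..n}) = ones_on (gpow r ` {n - b..n})" .
  then have "gpow r ` {n - a..n} = gpow r ` {n - b..n}"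
    by (simp add: ones_on_eq_iff)
  moreover have "{n - a..n} \<subseteq> {..n}" "{n - b..n} \<subseteq> {..n}"
    by auto
  ultimately have "{n - a..n} = {n - b..n}"
    using inj_on_image_eq_iff[OF inj_on_gpow] by blast
  with a b show "a = b"
    by simp
qed

end

end

theorem proposition3:
  fixes S :: "'g::group_add set" and r :: 'g
    and zero one :: 'a and mu :: "('g \<Rightarrow> 'a) \<Rightarrow> 'a" and p :: "'g \<Rightarrow> 'a"
    and n :: nat
  assumes "zero \<noteq> one"
    and "finite S" and "0 \<in> S" and "r \<in> S" and "r \<noteq> 0"
    and "p = restrict (\<lambda>s. if s = r then one else zero) S"
    and "lazy_local S mu p" and "mu p = one"
    and "n \<ge> 2"
  shows "ca_ord (cell_aut S mu) > enat n \<longleftrightarrow> (\<forall>j. 2 \<le> j \<and> j \<le> n \<longrightarrow> gpow r j \<notin> S)"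
proof
  interpret single_one_ca S mu p r zero one
    using assms by unfold_locales
  show "enat n < ca_ord tau" if "\<forall>j. 2 \<le> j \<and> j \<le> n \<longrightarrow> gpow r j \<notin> S"
    using that inj_on_funpow_tau ca_ord_gt_if_inj_on_funpow by blast
  show "\<forall>j. 2 \<le> j \<and> j \<le> n \<longrightarrow> gpow r j \<notin> S" if ord: "enat n < ca_ord tau"
  proof (intro allI impI notI)
    fix j assume "2 \<le> j \<and> j \<le> n" and "gpow r j \<in> S"
    then obtain i where "i < j" "gpow r (Suc i) \<in> S" "gpow r i \<noteq> 0"
      using gpow_mem_with_nonzero_pred \<open>0 \<in> S\<close> \<open>r \<noteq> 0\<close> by blast
    then have "ca_ord tau \<le> enat (Suc i)"
      using funpow_Suc_eq_if_gpow_in_S ca_ord_le_if_funpow_Suc_eq by blast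
    moreover have "enat (Suc i) \<le> enat n"
      using \<open>i < j\<close> \<open>2 \<le> j \<and> j \<le> n\<close> by simp
    ultimately show False
      using ord by (meson leD order.trans)
  qed
qed

end
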